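(* If a finite group $G$ is a $Q\sigma T$-group, then $G/R$ satisfies ${\bf Q}_{\sigma P}$ for every normal subgroup $R$ of $G$.
   Context: $\sigma=\{\sigma_i\mid i\in I\}$ is a partition of the set of all primes. A group is $\sigma$-primary if it is a $\sigma_i$-group for some $i$. $A_G$ is the core of $A$ in $G$. $A$ is $\sigma$-subnormal in $G$ if there is a chain $A=A_0\le\cdots\le A_n=G$ with, for each $i$, $A_{i-1}\trianglelefteq A_i$ or $A_i/(A_{i-1})_{A_i}$ $\sigma$-primary. $A$ is modular in $G$ if (1) $\langle X, A\cap Z\rangle=\langle X,A\rangle\cap Z$ for all $X\le Z\le G$, and (2) $\langle A, Y\cap Z\rangle=\langle A,Y\rangle\cap Z$ for all $Y,Z\le G$ with $A\le Z$. $A$ is $\sigma$-quasinormal if it is $\sigma$-subnormal and modular. $G$ is a $Q\sigma T$-group if whenever $H$ is $\sigma$-quasinormal in $K$ and $K$ is $\sigma$-quasinormal in $G$, $H$ is $\sigma$-quasinormal in $G$. A $P$-group of type $(p,q)$ is a group $A\rtimes\langle t\rangle$ with $A$ an elementary abelian $p$-group and $t$ of prime order $q\neq p$ inducing a non-trivial power automorphism (one fixing every subgroup) on $A$. A group $X$ satisfies ${\bf Q}_{\sigma(p,q)}$ if whenever $N$ is a soluble normal subgroup of $X$ and $P/N$ is a normal subgroup of $X/N$ that is $\sigma$-primary and a $P$-group of type $(p,q)$, every subgroup of $P/N$ is modular in $X/N$. $X$ satisfies ${\bf Q}_{\sigma P}$ if it satisfies ${\bf Q}_{\sigma(p,q)}$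 for every pair of primes $p,q$ for which a $P$-group of type $(p,q)$ exists. *)

theory Defs
  imports "HOL-Algebra.Algebra"
begin

definition prime_partition :: "nat set set \<Rightarrow> bool" where
  "prime_partition \<sigma> \<longleftrightarrow>
     (\<Union>\<sigma>) = {p. Factorial_Ring.prime (p::nat)} \<and> {} \<notin> \<sigma> \<and>
     (\<forall>s\<in>\<sigma>. \<forall>t\<in>\<sigma>. s \<noteq> t \<longrightarrow> s \<inter> t = {})"

definition sigma_primary :: "nat set set \<Rightarrow> ('a, 'b) monoid_scheme \<Rightarrow> bool" where
  "sigma_primary \<sigma> H \<longleftrightarrow>
     (\<exists>s\<in>\<sigma>. \<forall>p. Factorial_Ring.prime (p::nat) \<and> p dvd order H \<longrightarrow> p \<in> s)"

definition core :: "('a, 'b) monoid_scheme \<Rightarrow> 'a set \<Rightarrow> 'a set" where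
  "core G A = (\<Inter>g\<in>carrier G. (\<lambda>x. g \<otimes>\<^bsub>G\<^esub> x \<otimes>\<^bsub>G\<^esub> inv\<^bsub>G\<^esub> g) ` A)"

definition sigma_subnormal :: "nat set set \<Rightarrow> ('a, 'b) monoid_scheme \<Rightarrow> 'a set \<Rightarrow> bool" where
  "sigma_subnormal \<sigma> G A \<longleftrightarrow>
     (\<exists>(C :: nat \<Rightarrow> 'a set) n. C 0 = A \<and> C n = carrier G \<and>
        (\<forall>i\<le>n. subgroup (C i) G) \<and>
        (\<forall>i<n. C i \<subseteq> C (Suc i) \<and>
            (C i \<lhd> G\<lparr>carrier := C (Suc i)\<rparr> \<or>
             sigma_primary \<sigma> (G\<lparr>carrier := C (Suc i)\<rparr> Mod core (G\<lparr>carrier := C (Suc i)\<rparr>) (C i)))))"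

definition modular_subgroup :: "('a, 'b) monoid_scheme \<Rightarrow> 'a set \<Rightarrow> bool" where
  "modular_subgroup G A \<longleftrightarrow> subgroup A G \<and>
     (\<forall>U W. subgroup U G \<and> subgroup W G \<and> U \<subseteq> W \<longrightarrow>
        generate G (U \<union> (A \<inter> W)) = generate G (U \<union> A) \<inter> W) \<and>
     (\<forall>V W. subgroup V G \<and> subgroup W G \<and> A \<subseteq> W \<longrightarrow>
        generate G (A \<union> (V \<inter> W)) = generate G (A \<union> V) \<inter> W)"

definition sigma_quasinormal :: "nat set set \<Rightarrow> ('a, 'b) monoid_scheme \<Rightarrow> 'a set \<Rightarrow> bool" where
  "sigma_quasinormal \<sigma> G A \<longleftrightarrow> sigma_subnormal \<sigma> G A \<and> modular_subgroup G A"

definition QsigmaT_group :: "nat set set \<Rightarrow> ('a, 'b) monoid_scheme \<Rightarrow> bool" where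
  "QsigmaT_group \<sigma> G \<longleftrightarrow>
     (\<forall>H K. subgroup K G \<and> H \<subseteq> K \<and>
        sigma_quasinormal \<sigma> (G\<lparr>carrier := K\<rparr>) H \<and> sigma_quasinormal \<sigma> G K
        \<longrightarrow> sigma_quasinormal \<sigma> G H)"

text \<open>X is a P-group of type (p,q): X = A \<rtimes> <t>, A elementary abelian p-group (normal),
  t of prime order q \<noteq> p inducing a non-trivial power automorphism on A.\<close>
definition P_group_type :: "nat \<Rightarrow> nat \<Rightarrow> ('a, 'b) monoid_scheme \<Rightarrow> bool" where
  "P_group_type p q H \<longleftrightarrow> Factorial_Ring.prime (p::nat) \<and> Factorial_Ring.prime (q::nat) \<and> p \<noteq> q \<and>
     (\<exists>A t. A \<lhd> H \<and> comm_group (H\<lparr>carrier := A\<rparr>) \<and>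
        (\<forall>x\<in>A. x [^]\<^bsub>H\<^esub> p = \<one>\<^bsub>H\<^esub>) \<and>
        t \<in> carrier H \<and> group.ord H t = q \<and>
        A \<inter> generate H {t} = {\<one>\<^bsub>H\<^esub>} \<and>
        set_mult H A (generate H {t}) = carrier H \<and>
        (\<forall>B. subgroup B H \<and> B \<subseteq> A \<longrightarrow>
             (\<lambda>x. t \<otimes>\<^bsub>H\<^esub> x \<otimes>\<^bsub>H\<^esub> inv\<^bsub>H\<^esub> t) ` B = B) \<and>
        (\<exists>x\<in>A. t \<otimes>\<^bsub>H\<^esub> x \<otimes>\<^bsub>H\<^esub> inv\<^bsub>H\<^esub> t \<noteq> x))"

definition Q_sigma_pq :: "nat set set \<Rightarrow> nat \<Rightarrow> nat \<Rightarrow> ('a, 'b) monoid_scheme \<Rightarrow> bool" where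
  "Q_sigma_pq \<sigma> p q H \<longleftrightarrow>
     (\<forall>N Q. N \<lhd> H \<and> solvable (H\<lparr>carrier := N\<rparr>) \<and>
        Q \<lhd> (H Mod N) \<and>
        sigma_primary \<sigma> ((H Mod N)\<lparr>carrier := Q\<rparr>) \<and>
        P_group_type p q ((H Mod N)\<lparr>carrier := Q\<rparr>)
        \<longrightarrow> (\<forall>B. subgroup B (H Mod N) \<and> B \<subseteq> Q \<longrightarrow> modular_subgroup (H Mod N) B))"

text \<open>Property Q_{sigma P}: Q_{sigma(p,q)} for every pair of primes for which a P-group of
  type (p,q) exists (existence witnessed on a countable carrier type).\<close>
definition Q_sigma_P :: "nat set set \<Rightarrow> ('a, 'b) monoid_scheme \<Rightarrow> bool" where
  "Q_sigma_P \<sigma> H \<longleftrightarrow>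
     (\<forall>p q. (\<exists>Y :: nat monoid. group Y \<and> P_group_type p q Y) \<longrightarrow> Q_sigma_pq \<sigma> p q H)"

end

(*
  Let f be the quotient map from G onto X = (G/R)/N, let Q be the normal sigma-primary
  P-subgroup of X and B a subgroup of Q, with preimages Q* and B* in G.  Q* is normal in G,
  hence sigma-quasinormal.  A P-group has a modular subgroup lattice, and modularity of a
  subgroup lifts along an epimorphism whose kernel it contains, so B* is modular in Q*.
  Since B* contains the kernel of Q* -> Q, the quotient of Q* by the core of B* is a
  quotient of Q and therefore sigma-primary, so B* is sigma-subnormal in Q*.  The QsigmaT
  property now makes B* sigma-quasinormal, in particular modular, in G, and modularity
  passes to the image B of B*.
*)
theory Submission
  imports Defs
begin

lemma (in group) set_multE:
  assumes "x \<in> S <#> T"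
  obtains a b where "a \<in> S" "b \<in> T" "x = a \<otimes> b"
  using assms unfolding set_mult_def by blast

lemma (in group) set_multI:
  "a \<in> S \<Longrightarrow> b \<in> T \<Longrightarrow> a \<otimes> b \<in> S <#> T"
  unfolding set_mult_def by blast

lemma (in group) set_mult_subset_subgroup:
  assumes "subgroup H G" "S \<subseteq> H" "T \<subseteq> H"
  shows "S <#> T \<subseteq> H"
  using assms by (auto elim!: set_multE intro: subgroup.m_closed)

lemma (in group) subset_set_mult_left:
  assumes "subgroup T G" "S \<subseteq> carrier G"
  shows "S \<subseteq> S <#> T"
proof
  fix x assume "x \<in> S"
  then have "x \<otimes> \<one> \<in> S <#> T" by (rule set_multI[OF _ subgroup.one_closed[OF assms(1)]])
  then show "x \<in> S <#> T" using \<open>x \<in> S\<close> assms(2) by auto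
qed

lemma (in group) subset_set_mult_right:
  assumes "subgroup S G" "T \<subseteq> carrier G"
  shows "T \<subseteq> S <#> T"
proof
  fix y assume "y \<in> T"
  then have "\<one> \<otimes> y \<in> S <#> T" by (rule set_multI[OF subgroup.one_closed[OF assms(1)]])
  then show "y \<in> S <#> T" using \<open>y \<in> T\<close> assms(2) by auto
qed

lemma (in group) generate_Un_normal_subset:
  assumes "N \<lhd> G" "subgroup H G"
  shows "generate G (N \<union> H) \<subseteq> N <#> H"
proof (rule generate_subgroup_incl)
  show "subgroup (N <#> H) G"
    by (rule mult_norm_subgroup[OF assms])
  have "subgroup N G" by (rule normal_imp_subgroup[OF assms(1)])
  then show "N \<union> H \<subseteq> N <#> H"
    using subset_set_mult_left[OF assms(2)] subset_set_mult_right subgroup.subset assms(2)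
    by (metis Un_least)
qed

text \<open>The nontrivial inclusion of the modular law; the reverse one holds for every subgroup W \<supseteq> S.\<close>
definition modular_law :: "('a, 'b) monoid_scheme \<Rightarrow> 'a set \<Rightarrow> 'a set \<Rightarrow> 'a set \<Rightarrow> bool" where
  "modular_law G S T W \<longleftrightarrow> generate G (S \<union> T) \<inter> W \<subseteq> generate G (S \<union> (T \<inter> W))"

lemma (in group) generate_Un_Int_subset:
  assumes "S \<subseteq> carrier G" "T \<subseteq> carrier G" "subgroup W G" "S \<subseteq> W"
  shows "generate G (S \<union> (T \<inter> W)) \<subseteq> generate G (S \<union> T) \<inter> W"
  using mono_generate[of "S \<union> (T \<inter> W)" "S \<union> T"] generate_subgroup_incl[OF _ assms(3)] assms(4)
  by auto

lemma (in group) modular_law_iff: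
  assumes "subgroup S G" "subgroup T G" "subgroup W G" "S \<subseteq> W"
  shows "generate G (S \<union> (T \<inter> W)) = generate G (S \<union> T) \<inter> W \<longleftrightarrow> modular_law G S T W"
proof -
  have "generate G (S \<union> (T \<inter> W)) \<subseteq> generate G (S \<union> T) \<inter> W"
    using generate_Un_Int_subset[OF subgroup.subset[OF assms(1)] subgroup.subset[OF assms(2)] assms(3,4)] .
  then show ?thesis unfolding modular_law_def by blast
qed

lemma (in group) modular_subgroup_iff:
  "modular_subgroup G A \<longleftrightarrow> subgroup A G \<and>
     (\<forall>U W. subgroup U G \<and> subgroup W G \<and> U \<subseteq> W \<longrightarrow> modular_law G U A W) \<and>
     (\<forall>V W. subgroup V G \<and> subgroup W G \<and> A \<subseteq> W \<longrightarrow> modular_law G A V W)"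
  unfolding modular_subgroup_def by (simp add: modular_law_iff cong: conj_cong)

lemma (in group) modular_law_normal:
  assumes N: "N \<lhd> G" and H: "subgroup H G" and W: "subgroup W G" and NHW: "N \<subseteq> W \<or> H \<subseteq> W"
  shows "modular_law G N H W" "modular_law G H N W"
proof -
  let ?D = "generate G ((N \<inter> W) \<union> (H \<inter> W))"
  have sN: "subgroup N G" by (rule normal_imp_subgroup[OF N])
  have "generate G (N \<union> H) \<inter> W \<subseteq> ?D"
  proof
    fix g assume g: "g \<in> generate G (N \<union> H) \<inter> W"
    then have "g \<in> N <#> H" using generate_Un_normal_subset[OF N H] by blast
    then obtain n h where nh: "n \<in> N" "h \<in> H" "g = n \<otimes> h" by (rule set_multE)
    have c: "n \<in> carrier G" "h \<in> carrier G"
      using subgroup.mem_carrier[OF sN nh(1)] subgroup.mem_carrier[OF H nh(2)] .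
    have gW: "g \<in> W" using g by blast
    have "n \<in> W \<and> h \<in> W"
    proof (cases "N \<subseteq> W")
      case True
      have "h = inv n \<otimes> g" using nh c by (simp add: m_assoc[symmetric])
      also have "\<dots> \<in> W"
        using True nh(1) gW by (intro subgroup.m_closed[OF W] subgroup.m_inv_closed[OF W]) blast+
      finally show ?thesis using True nh(1) by blast
    next
      case False
      then have HW: "H \<subseteq> W" using NHW by blast
      have "n = g \<otimes> inv h" using nh c by (simp add: m_assoc)
      also have "\<dots> \<in> W"
        using HW nh(2) gW by (intro subgroup.m_closed[OF W] subgroup.m_inv_closed[OF W]) blast+
      finally show ?thesis using HW nh(2) by blast
    qed
    then have "n \<in> ?D" "h \<in> ?D" using nh(1,2) by (blast intro: generate.incl)+
    then show "g \<in> ?D" unfolding nh(3) by (rule generate.eng)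
  qed
  moreover have "?D \<subseteq> generate G (N \<union> (H \<inter> W))" "?D \<subseteq> generate G (H \<union> (N \<inter> W))"
    by (rule mono_generate, blast)+
  ultimately show "modular_law G N H W" "modular_law G H N W"
    unfolding modular_law_def by (auto simp: Un_commute)
qed

lemma (in group) normal_modular_subgroup:
  assumes "N \<lhd> G" shows "modular_subgroup G N"
  unfolding modular_subgroup_iff
  using assms normal_imp_subgroup[OF assms] modular_law_normal(1,2)[OF assms] by blast

lemma (in group_hom) subgroup_vimage:
  assumes "subgroup S H" shows "subgroup (carrier G \<inter> h -` S) G"
proof (rule G.subgroupI)
  show "carrier G \<inter> h -` S \<noteq> {}" using subgroup.one_closed[OF assms] by auto
qed (use subgroup.m_inv_closed[OF assms] subgroup.m_closed[OF assms] in auto)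

lemma (in group_hom) normal_vimage:
  assumes "S \<lhd> H" shows "carrier G \<inter> h -` S \<lhd> G"
  unfolding G.normal_inv_iff
  using subgroup_vimage[OF normal_imp_subgroup[OF assms]] normal.inv_op_closed2[OF assms] by auto

lemma (in group_hom) image_vimage_eq:
  assumes "h ` carrier G = carrier H" "S \<subseteq> carrier H"
  shows "h ` (carrier G \<inter> h -` S) = S"
proof
  show "S \<subseteq> h ` (carrier G \<inter> h -` S)"
  proof
    fix y assume "y \<in> S"
    moreover from this obtain x where "x \<in> carrier G" "y = h x" using assms by blast
    ultimately show "y \<in> h ` (carrier G \<inter> h -` S)" by blast
  qed
qed blast

lemma (in group_hom) kernel_subset_vimage:
  assumes "subgroup S H" shows "kernel G H h \<subseteq> carrier G \<inter> h -` S"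
  using subgroup.one_closed[OF assms] unfolding kernel_def by auto

lemma (in group_hom) image_Int_of_kernel_subset:
  assumes "subgroup W G" "kernel G H h \<subseteq> W" "S \<subseteq> carrier G"
  shows "h ` (S \<inter> W) = h ` S \<inter> h ` W"
proof
  show "h ` S \<inter> h ` W \<subseteq> h ` (S \<inter> W)"
  proof
    fix y assume "y \<in> h ` S \<inter> h ` W"
    then obtain s w where sw: "s \<in> S" "w \<in> W" "h s = y" "h w = y" by auto
    have c: "s \<in> carrier G" "w \<in> carrier G"
      using assms(3) sw(1) subgroup.mem_carrier[OF assms(1) sw(2)] by auto
    have "h w = h s" using sw(3,4) by simp
    then have "inv w \<otimes> s \<in> kernel G H h" using c unfolding kernel_def by simp
    then have "w \<otimes> (inv w \<otimes> s) \<in> W"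
      using assms(2) by (intro subgroup.m_closed[OF assms(1) sw(2)]) blast
    then have "s \<in> W" using c by (simp add: G.m_assoc[symmetric])
    then show "y \<in> h ` (S \<inter> W)" using sw by blast
  qed
qed (rule image_Int_subset)

lemma (in group_hom) modular_law_image:
  assumes S: "S \<subseteq> carrier G" and T: "T \<subseteq> carrier G"
    and W: "subgroup W G" "kernel G H h \<subseteq> W" and law: "modular_law G S T W"
  shows "modular_law H (h ` S) (h ` T) (h ` W)"
proof -
  have "generate H (h ` S \<union> h ` T) \<inter> h ` W = h ` (generate G (S \<union> T) \<inter> W)"
    using generate_img[of "S \<union> T"] image_Int_of_kernel_subset[OF W, of "generate G (S \<union> T)"]
      G.generate_incl S T by (simp add: image_Un)
  also have "\<dots> \<subseteq> h ` generate G (S \<union> (T \<inter> W))"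
    using law unfolding modular_law_def by blast
  also have "\<dots> = generate H (h ` S \<union> (h ` T \<inter> h ` W))"
    using generate_img[of "S \<union> (T \<inter> W)"] image_Int_of_kernel_subset[OF W T] S T
    by (simp add: image_Un Int_absorb2 le_infI1)
  finally show ?thesis unfolding modular_law_def .
qed

lemma (in group_hom) modular_law_vimage:
  assumes S: "subgroup S G" and T: "subgroup T G" and W: "subgroup W G" "S \<subseteq> W"
    and ker: "kernel G H h \<subseteq> S \<or> kernel G H h \<subseteq> T"
    and law: "modular_law H (h ` S) (h ` T) (h ` W)"
  shows "modular_law G S T W"
  unfolding modular_law_def
proof
  let ?D = "generate G (S \<union> (T \<inter> W))"
  have Sc: "S \<subseteq> carrier G" and Tc: "T \<subseteq> carrier G" using S T subgroup.subset by auto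
  have sD: "subgroup ?D G" by (rule G.generate_is_subgroup) (use Sc Tc in blast)
  have DW: "?D \<subseteq> W" by (rule G.generate_subgroup_incl[OF _ W(1)]) (use W(2) in blast)
  have "kernel G H h \<subseteq> T \<or> kernel G H h \<subseteq> W" using ker W(2) by blast
  then have img: "h ` (T \<inter> W) = h ` T \<inter> h ` W"
    using image_Int_of_kernel_subset[OF T _ subgroup.subset[OF W(1)]]
      image_Int_of_kernel_subset[OF W(1) _ Tc] by (metis Int_commute)
  fix x assume x: "x \<in> generate G (S \<union> T) \<inter> W"
  have xc: "x \<in> carrier G" using x subgroup.mem_carrier[OF W(1)] by blast
  have "h x \<in> generate H (h ` S \<union> h ` T) \<inter> h ` W"
    using x generate_img[of "S \<union> T"] Sc Tc by (simp add: image_Un)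
  also have "\<dots> \<subseteq> generate H (h ` S \<union> (h ` T \<inter> h ` W))"
    using law unfolding modular_law_def .
  also have "\<dots> = h ` ?D"
    using generate_img[of "S \<union> (T \<inter> W)"] Sc Tc img by (simp add: image_Un le_infI1)
  finally obtain d where d: "d \<in> ?D" "h x = h d" by blast
  have dc: "d \<in> carrier G" using subgroup.mem_carrier[OF sD d(1)] .
  define k where "k = inv d \<otimes> x"
  have "k \<in> kernel G H h" unfolding k_def kernel_def using xc dc d by simp
  moreover have "k \<in> W"
    unfolding k_def using x d(1) DW
    by (intro subgroup.m_closed[OF W(1)] subgroup.m_inv_closed[OF W(1)]) blast+
  ultimately have "k \<in> S \<union> (T \<inter> W)" using ker by blast
  then have "k \<in> ?D" by (rule generate.incl)
  moreover have "x = d \<otimes> k" unfolding k_def using xc dc by (simp add: G.m_assoc[symmetric])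
  ultimately show "x \<in> ?D" using d(1) generate.eng by metis
qed

lemma (in group_hom) modular_subgroup_image:
  assumes surj: "h ` carrier G = carrier H" and A: "modular_subgroup G A"
  shows "modular_subgroup H (h ` A)"
proof -
  have sA: "subgroup A G"
    and lawA: "\<And>U W. subgroup U G \<Longrightarrow> subgroup W G \<Longrightarrow> U \<subseteq> W \<Longrightarrow> modular_law G U A W"
              "\<And>V W. subgroup V G \<Longrightarrow> subgroup W G \<Longrightarrow> A \<subseteq> W \<Longrightarrow> modular_law G A V W"
    using A[unfolded G.modular_subgroup_iff] by blast+
  have Ac: "A \<subseteq> carrier G" by (rule subgroup.subset[OF sA])
  let ?pre = "\<lambda>S. carrier G \<inter> h -` S"
  have pre: "subgroup (?pre S) G" "h ` ?pre S = S" "kernel G H h \<subseteq> ?pre S" "?pre S \<subseteq> carrier G"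
    if "subgroup S H" for S
    using subgroup_vimage[OF that] image_vimage_eq[OF surj subgroup.subset[OF that]]
      kernel_subset_vimage[OF that] by auto
  show ?thesis
    unfolding H.modular_subgroup_iff
  proof (intro conjI allI impI)
    show "subgroup (h ` A) H" by (rule subgroup_img_is_subgroup[OF sA])
  next
    fix U W assume a: "subgroup U H \<and> subgroup W H \<and> U \<subseteq> W"
    then have "?pre U \<subseteq> ?pre W" by blast
    then have "modular_law G (?pre U) A (?pre W)"
      using a by (intro lawA(1) pre(1)) blast+
    then have "modular_law H (h ` ?pre U) (h ` A) (h ` ?pre W)"
      using a by (intro modular_law_image[OF pre(4) Ac pre(1,3)]) blast+
    then show "modular_law H U (h ` A) W"
      using a pre(2) by simp
  next
    fix V W assume a: "subgroup V H \<and> subgroup W H \<and> h ` A \<subseteq> W"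
    then have "A \<subseteq> ?pre W" using Ac by blast
    then have "modular_law G A (?pre V) (?pre W)"
      using a by (intro lawA(2) pre(1)) blast+
    then have "modular_law H (h ` A) (h ` ?pre V) (h ` ?pre W)"
      using a by (intro modular_law_image[OF Ac pre(4) pre(1,3)]) blast+
    then show "modular_law H (h ` A) V W"
      using a pre(2) by simp
  qed
qed

lemma (in group_hom) modular_subgroup_vimage:
  assumes surj: "h ` carrier G = carrier H" and B: "modular_subgroup H B"
  shows "modular_subgroup G (carrier G \<inter> h -` B)"
proof -
  let ?M = "carrier G \<inter> h -` B"
  have sB: "subgroup B H"
    and lawB: "\<And>U W. subgroup U H \<Longrightarrow> subgroup W H \<Longrightarrow> U \<subseteq> W \<Longrightarrow> modular_law H U B W"
              "\<And>V W. subgroup V H \<Longrightarrow> subgroup W H \<Longrightarrow> B \<subseteq> W \<Longrightarrow> modular_law H B V W"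
    using B[unfolded H.modular_subgroup_iff] by blast+
  have sM: "subgroup ?M G" by (rule subgroup_vimage[OF sB])
  have hM: "h ` ?M = B" by (rule image_vimage_eq[OF surj subgroup.subset[OF sB]])
  have kM: "kernel G H h \<subseteq> ?M" by (rule kernel_subset_vimage[OF sB])
  show ?thesis
    unfolding G.modular_subgroup_iff
  proof (intro conjI allI impI)
    show "subgroup ?M G" by (rule sM)
  next
    fix U W assume a: "subgroup U G \<and> subgroup W G \<and> U \<subseteq> W"
    then have "modular_law H (h ` U) B (h ` W)"
      by (intro lawB(1) subgroup_img_is_subgroup) blast+
    then show "modular_law G U ?M W"
      using a kM hM by (intro modular_law_vimage[OF _ sM]) simp_all
  next
    fix V W assume a: "subgroup V G \<and> subgroup W G \<and> ?M \<subseteq> W"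
    then have "modular_law H B (h ` V) (h ` W)"
      using hM by (intro lawB(2) subgroup_img_is_subgroup) blast+
    then show "modular_law G ?M V W"
      using a kM hM by (intro modular_law_vimage[OF sM]) simp_all
  qed
qed

lemma (in group) conjugates_eq_coset:
  assumes "g \<in> carrier G"
  shows "(\<lambda>x. g \<otimes> x \<otimes> inv g) ` M = g <# M #> inv g"
  unfolding l_coset_def r_coset_def by auto

lemma (in group) subgroup_core:
  assumes "subgroup M G" shows "subgroup (core G M) G"
  unfolding core_def
proof (rule subgroups_Inter)
  show "(\<lambda>g. (\<lambda>x. g \<otimes> x \<otimes> inv g) ` M) ` carrier G \<noteq> {}" by blast
qed (auto simp: conjugates_eq_coset intro: subgroup_conjugation_is_surj2[OF _ assms])

lemma (in group) normal_subset_core: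
  assumes N: "N \<lhd> G" and NM: "N \<subseteq> M" shows "N \<subseteq> core G M"
  unfolding core_def
proof (intro subsetI INT_I)
  fix x g assume x: "x \<in> N" and g: "g \<in> carrier G"
  have xc: "x \<in> carrier G" using subgroup.mem_carrier[OF normal_imp_subgroup[OF N] x] .
  have "inv g \<otimes> x \<otimes> g \<in> M" using normal.inv_op_closed1[OF N g x] NM by blast
  moreover have "x = g \<otimes> (inv g \<otimes> x \<otimes> g) \<otimes> inv g"
    using g xc by (simp add: m_assoc) (simp add: m_assoc[symmetric])
  ultimately show "x \<in> (\<lambda>x. g \<otimes> x \<otimes> inv g) ` M" by (rule rev_image_eqI)
qed

lemma (in group) card_rcosets_dvd:
  assumes fin: "finite (carrier G)" and K: "subgroup K G" and C: "subgroup C G" and KC: "K \<subseteq> C"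
  shows "card (rcosets C) dvd card (rcosets K)"
proof -
  have "card (rcosets\<^bsub>G\<lparr>carrier := C\<rparr>\<^esub> K) * card K = card C"
    using group.lagrange[OF subgroup_imp_group[OF C] subgroup_incl[OF K C KC]] by (simp add: order_def)
  then obtain j where j: "card C = card K * j" by (metis mult.commute)
  have "card (rcosets C) * j * card K = card (rcosets K) * card K"
    using lagrange[OF C] lagrange[OF K] j by (simp add: ac_simps)
  moreover have "card K > 0"
    using fin subgroup.subset[OF K] subgroup.one_closed[OF K] by (metis card_gt_0_iff empty_iff finite_subset)
  ultimately have "card (rcosets C) * j = card (rcosets K)" by simp
  then show ?thesis by (metis dvd_triv_left)
qed

lemma sigma_primary_dvd:
  assumes "sigma_primary \<sigma> P" "order Q dvd order P"
  shows "sigma_primary \<sigma> Q"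
  using assms dvd_trans unfolding sigma_primary_def by blast

lemma (in group) sigma_subnormal_one_step:
  assumes "subgroup H G" and "H \<lhd> G \<or> sigma_primary \<sigma> (G Mod core G H)"
  shows "sigma_subnormal \<sigma> G H"
  unfolding sigma_subnormal_def
proof (intro exI conjI allI impI)
  let ?C = "\<lambda>i::nat. if i = 0 then H else carrier G"
  show "?C 0 = H" "?C 1 = carrier G" by simp_all
  show "subgroup (?C i) G" if "i \<le> 1" for i using assms(1) subgroup_self by simp
  show "?C i \<subseteq> ?C (Suc i)" if "i < 1" for i using that subgroup.subset[OF assms(1)] by simp
  show "?C i \<lhd> G\<lparr>carrier := ?C (Suc i)\<rparr> \<or>
        sigma_primary \<sigma> (G\<lparr>carrier := ?C (Suc i)\<rparr> Mod core (G\<lparr>carrier := ?C (Suc i)\<rparr>) (?C i))"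
    if "i < 1" for i using that assms(2) by simp
qed

lemma (in group_hom) sigma_subnormal_of_kernel_subset:
  assumes fin: "finite (carrier G)" and surj: "h ` carrier G = carrier H"
    and P: "sigma_primary \<sigma> H" and M: "subgroup M G" and KM: "kernel G H h \<subseteq> M"
  shows "sigma_subnormal \<sigma> G M"
proof -
  have "kernel G H h \<subseteq> core G M" by (rule G.normal_subset_core[OF normal_kernel KM])
  then have "card (rcosets (core G M)) dvd card (rcosets (kernel G H h))"
    by (intro G.card_rcosets_dvd fin subgroup_kernel G.subgroup_core M)
  also have "card (rcosets (kernel G H h)) = order H"
    using iso_same_card[OF FactGroup_iso[OF surj]] unfolding order_def by (simp add: FactGroup_def)
  finally have "order (G Mod core G M) dvd order H" unfolding order_def by (simp add: FactGroup_def)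
  then show ?thesis
    using G.sigma_subnormal_one_step[OF M] sigma_primary_dvd[OF P] by blast
qed

lemma (in group) normal_sigma_quasinormal:
  assumes "N \<lhd> G" shows "sigma_quasinormal \<sigma> G N"
  unfolding sigma_quasinormal_def
  using sigma_subnormal_one_step[OF normal_imp_subgroup[OF assms]] assms normal_modular_subgroup by blast

lemma mod_inverse_exists:
  fixes p k :: nat
  assumes "Factorial_Ring.prime p" "\<not> p dvd k"
  obtains j where "(k * j) mod p = 1"
proof -
  have "k \<noteq> 0" using assms(2) by (metis dvd_0_right)
  moreover have "gcd k p = 1"
    using assms prime_imp_coprime[of p k] by (simp add: coprime_commute)
  ultimately obtain j i where "k * j = p * i + 1" using bezout_nat[of k p] by auto
  then have "(k * j) mod p = 1 mod p" by (simp only: mod_mult_self4)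
  then show ?thesis using that prime_gt_1_nat[OF assms(1)] by simp
qed

lemma (in group) pow_mod_exponent:
  assumes "x \<in> carrier G" "x [^] p = \<one>"
  shows "x [^] (m::nat) = x [^] (m mod p)"
proof -
  have "x [^] m = x [^] (p * (m div p) + m mod p)" by simp
  also have "\<dots> = (x [^] p) [^] (m div p) \<otimes> x [^] (m mod p)"
    using assms(1) by (simp add: nat_pow_pow nat_pow_mult)
  finally show ?thesis using assms by simp
qed

lemma (in group) pow_pow_mod_inverse:
  assumes "x \<in> carrier G" "x [^] p = \<one>" "(k * j) mod p = (1::nat)"
  shows "(x [^] k) [^] j = x"
  using pow_mod_exponent[OF assms(1,2), of "k * j"] assms by (simp add: nat_pow_pow)

lemma (in group) subgroup_nat_pow_closed:
  assumes "subgroup H G" "h \<in> H" shows "h [^] (n::nat) \<in> H"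
  by (induction n) (simp_all add: subgroup.one_closed[OF assms(1)] subgroup.m_closed[OF assms(1) _ assms(2)])

lemma (in group) normal_if_conjugation_invariant_generators:
  assumes C: "subgroup C G" and S: "S \<subseteq> carrier G" "carrier G \<subseteq> generate G S"
    and inv: "\<And>g. g \<in> S \<Longrightarrow> (\<lambda>x. g \<otimes> x \<otimes> inv g) ` C = C"
  shows "C \<lhd> G"
proof -
  have Cc: "C \<subseteq> carrier G" by (rule subgroup.subset[OF C])
  have "S \<subseteq> normalizer G C"
    using S(1) inv conjugates_eq_coset[symmetric] Cc unfolding normalizer_def stabilizer_def by auto
  then have "carrier G \<subseteq> normalizer G C"
    using S(2) generate_subgroup_incl[OF _ normalizer_imp_subgroup[OF Cc]] by blast
  then have "normalizer G C = carrier G"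
    using subgroup.subset[OF normalizer_imp_subgroup[OF Cc]] by blast
  then show ?thesis using subgroup_in_normalizer[OF C] by simp
qed

text \<open>The elementary abelian normal subgroup A of a P-group: every subgroup of A is normal, and
  G/A, being cyclic of prime order, has no proper nontrivial subgroup, which is what
  \<open>supplement\<close> says.\<close>
locale P_group_decomposition = group +
  fixes A :: "'a set" and p :: nat
  assumes A_normal: "A \<lhd> G"
    and A_comm: "\<And>x y. x \<in> A \<Longrightarrow> y \<in> A \<Longrightarrow> x \<otimes> y = y \<otimes> x"
    and A_exponent: "\<And>x. x \<in> A \<Longrightarrow> x [^] p = \<one>"
    and prime_p: "Factorial_Ring.prime p"
    and normal_if_subset_A: "\<And>C. subgroup C G \<Longrightarrow> C \<subseteq> A \<Longrightarrow> C \<lhd> G"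
    and supplement: "\<And>H. subgroup H G \<Longrightarrow> \<not> H \<subseteq> A \<Longrightarrow> carrier G \<subseteq> A <#> H"
begin

lemma subgroup_A: "subgroup A G"
  by (rule normal_imp_subgroup[OF A_normal])

lemma A_carrier: "x \<in> A \<Longrightarrow> x \<in> carrier G"
  by (rule subgroup.mem_carrier[OF subgroup_A])

lemma subset_if_Int_A_subset:
  assumes H: "subgroup H G" and H': "subgroup H' G" and sub: "H' \<subseteq> H"
    and nH': "\<not> H' \<subseteq> A" and int: "H \<inter> A \<subseteq> H'"
  shows "H \<subseteq> H'"
proof
  fix g assume g: "g \<in> H"
  then have "g \<in> A <#> H'" using supplement[OF H' nH'] subgroup.mem_carrier[OF H] by blast
  then obtain a h where ah: "a \<in> A" "h \<in> H'" "g = a \<otimes> h" by (rule set_multE)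
  have c: "a \<in> carrier G" "h \<in> carrier G" using A_carrier[OF ah(1)] subgroup.mem_carrier[OF H' ah(2)] .
  have "a = g \<otimes> inv h" using ah c by (simp add: m_assoc)
  also have "\<dots> \<in> H"
    using g ah(2) sub by (intro subgroup.m_closed[OF H] subgroup.m_inv_closed[OF H]) blast+
  finally have "a \<in> H'" using ah(1) int by blast
  then show "g \<in> H'" unfolding ah(3) by (rule subgroup.m_closed[OF H' _ ah(2)])
qed

text \<open>If p does not divide k, let j invert k modulo p: then (w d^k)^j = w^j d, and
  x (w^j d) = (x d) w^j lies in V \<inter> Z.\<close>
lemma A_power_mem:
  assumes D: "subgroup D G" and Z: "subgroup Z G" and V: "subgroup V G"
    and x: "x \<in> D" "x \<in> Z" and d: "d \<in> A" "x \<otimes> d \<in> V" and VZ: "V \<inter> Z \<subseteq> D"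
    and w: "w \<in> V \<inter> A" and e: "w \<otimes> d [^] (k::nat) \<in> Z"
  shows "w \<otimes> d [^] k \<in> D"
proof -
  have xc: "x \<in> carrier G" by (rule subgroup.mem_carrier[OF D x(1)])
  have dc: "d \<in> carrier G" and wc: "w \<in> carrier G" using A_carrier d(1) w by auto
  have dk: "d [^] k \<in> A" by (rule subgroup_nat_pow_closed[OF subgroup_A d(1)])
  show ?thesis
  proof (cases "p dvd k")
    case True
    then have "d [^] k = \<one>" using pow_mod_exponent[OF dc A_exponent[OF d(1)], of k] by simp
    then show ?thesis using w e VZ wc by auto
  next
    case False
    then obtain j where j: "(k * j) mod p = 1" using mod_inverse_exists[OF prime_p] by blast
    define f where "f = (w \<otimes> d [^] k) [^] j"
    have wj: "w [^] j \<in> A" using w subgroup_nat_pow_closed[OF subgroup_A] by blast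
    have f_eq: "f = w [^] j \<otimes> d"
      unfolding f_def using A_comm[OF _ dk] A_comm[OF wj d(1)] w wc dc
      by (simp add: pow_mult_distrib pow_pow_mod_inverse[OF dc A_exponent[OF d(1)] j])
    have "x \<otimes> f = (x \<otimes> d) \<otimes> w [^] j"
      unfolding f_eq using A_comm[OF wj d(1)] xc wc dc
      by (simp add: m_assoc)
    moreover have "w [^] j \<in> V" using w subgroup_nat_pow_closed[OF V] by blast
    ultimately have "x \<otimes> f \<in> V" using d(2) subgroup.m_closed[OF V] by simp
    moreover have fZ: "f \<in> Z" unfolding f_def by (rule subgroup_nat_pow_closed[OF Z e])
    then have "x \<otimes> f \<in> Z" by (rule subgroup.m_closed[OF Z x(2)])
    ultimately have "x \<otimes> f \<in> V \<inter> Z" by blast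
    then have "x \<otimes> f \<in> D" using VZ by blast
    then have "inv x \<otimes> (x \<otimes> f) \<in> D"
      by (rule subgroup.m_closed[OF D subgroup.m_inv_closed[OF D x(1)]])
    then have fD: "f \<in> D" using xc subgroup.mem_carrier[OF Z fZ] by (simp add: m_assoc[symmetric])
    have "(j * k) mod p = 1" using j by (simp add: mult.commute)
    moreover have "w \<otimes> d [^] k \<in> A" using w dk subgroup.m_closed[OF subgroup_A] by blast
    ultimately have "f [^] k = w \<otimes> d [^] k"
      unfolding f_def using A_carrier A_exponent pow_pow_mod_inverse by blast
    then show ?thesis using subgroup_nat_pow_closed[OF D fD, of k] by simp
  qed
qed

lemma nat_power_of_generate_A:
  assumes "d \<in> A" "s \<in> generate G {d}"
  obtains k :: nat where "s = d [^] k"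
proof -
  have dc: "d \<in> carrier G" by (rule A_carrier[OF assms(1)])
  have "ord d dvd p" using A_exponent[OF assms(1)] pow_eq_id[OF dc] by blast
  then have "ord d \<noteq> 0" using prime_gt_0_nat[OF prime_p] by (metis dvd_0_left_iff less_irrefl)
  then show ?thesis using assms(2) generate_pow_nat[OF dc] that by blast
qed

lemma A_product_normal:
  assumes U: "subgroup U G" and V: "subgroup V G" and d: "d \<in> A"
  defines "C \<equiv> (U \<inter> A) <#> ((V \<inter> A) <#> generate G {d})"
  shows "C \<lhd> G" "C \<subseteq> A" "U \<inter> A \<subseteq> C" "V \<inter> A \<subseteq> C" "d \<in> C"
proof -
  have sUA: "subgroup (U \<inter> A) G" and sVA: "subgroup (V \<inter> A) G"
    using subgroups_Inter_pair subgroup_A U V by blast+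
  have sd: "subgroup (generate G {d}) G" using generate_is_subgroup A_carrier[OF d] by blast
  have dA: "generate G {d} \<subseteq> A" using generate_subgroup_incl[OF _ subgroup_A] d by blast
  have nVd: "(V \<inter> A) <#> generate G {d} \<lhd> G"
    using normal_subgroup_set_mult_closed normal_if_subset_A sVA sd dA by blast
  then show "C \<lhd> G"
    unfolding C_def using normal_subgroup_set_mult_closed normal_if_subset_A[OF sUA] by blast
  show "C \<subseteq> A"
    unfolding C_def using set_mult_subset_subgroup[OF subgroup_A] dA by (meson Int_lower2)
  show "U \<inter> A \<subseteq> C"
    unfolding C_def by (rule subset_set_mult_left[OF normal_imp_subgroup[OF nVd] subgroup.subset[OF sUA]])
  have Vd_C: "(V \<inter> A) <#> generate G {d} \<subseteq> C"
    unfolding C_def by (rule subset_set_mult_right[OF sUA subgroup.subset[OF normal_imp_subgroup[OF nVd]]])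
  then show "V \<inter> A \<subseteq> C"
    using subset_set_mult_left[OF sd subgroup.subset[OF sVA]] by blast
  show "d \<in> C"
    using Vd_C subset_set_mult_right[OF sVA subgroup.subset[OF sd]] generate.incl[of d "{d}" G] by blast
qed

lemma generate_Un_Int_A_subset:
  assumes U: "subgroup U G" and V: "subgroup V G"
    and x: "x \<in> U" "x \<notin> A" and d: "d \<in> A" "x \<otimes> d \<in> V"
  shows "generate G (U \<union> V) \<inter> A \<subseteq> (U \<inter> A) <#> ((V \<inter> A) <#> generate G {d})"
    (is "_ \<subseteq> ?C")
proof -
  note C = A_product_normal[OF U V d(1)]
  let ?E = "generate G (?C \<union> U)"
  have sE: "subgroup ?E G"
    using generate_is_subgroup subgroup.subset[OF normal_imp_subgroup[OF C(1)]] subgroup.subset[OF U] by simp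
  have CE: "?C \<subseteq> ?E" and UE: "U \<subseteq> ?E" using generate.incl[of _ "?C \<union> U" G] by blast+
  have "x \<otimes> d \<in> ?E" using x(1) C(5) CE UE by (intro generate.eng) blast+
  moreover have "x \<otimes> d \<notin> A"
  proof
    assume "x \<otimes> d \<in> A"
    then have "(x \<otimes> d) \<otimes> inv d \<in> A"
      by (rule subgroup.m_closed[OF subgroup_A _ subgroup.m_inv_closed[OF subgroup_A d(1)]])
    then show False using x subgroup.mem_carrier[OF U] A_carrier[OF d(1)] by (simp add: m_assoc)
  qed
  ultimately have "V \<subseteq> V \<inter> ?E"
    using C(4) CE d(2) by (intro subset_if_Int_A_subset[OF V subgroups_Inter_pair[OF V sE]]) blast+
  then have "generate G (U \<union> V) \<subseteq> ?E"
    using UE by (intro generate_subgroup_incl[OF _ sE]) blast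
  moreover have "?E \<inter> A \<subseteq> generate G (?C \<union> (U \<inter> A))"
    using modular_law_normal(1)[OF C(1) U subgroup_A] C(2) unfolding modular_law_def by blast
  moreover have "generate G (?C \<union> (U \<inter> A)) \<subseteq> ?C"
    using C(3) by (intro generate_subgroup_incl[OF _ normal_imp_subgroup[OF C(1)]]) blast
  ultimately show ?thesis by blast
qed

lemma Int_A_subset_generate:
  assumes U: "subgroup U G" and V: "subgroup V G" and Z: "subgroup Z G" and UZ: "U \<subseteq> Z"
    and x: "x \<in> U" "x \<notin> A" and d: "d \<in> A" "x \<otimes> d \<in> V"
  shows "generate G (U \<union> V) \<inter> Z \<inter> A \<subseteq> generate G (U \<union> (V \<inter> Z))" (is "_ \<subseteq> ?D")
proof
  have Uc: "U \<subseteq> carrier G" and Vc: "V \<subseteq> carrier G" using U V subgroup.subset by auto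
  have sD: "subgroup ?D G" by (rule generate_is_subgroup) (use Uc Vc in blast)
  have UD: "U \<subseteq> ?D" and VZD: "V \<inter> Z \<subseteq> ?D" using generate.incl[of _ "U \<union> (V \<inter> Z)" G] by blast+
  fix e assume e: "e \<in> generate G (U \<union> V) \<inter> Z \<inter> A"
  then have "e \<in> (U \<inter> A) <#> ((V \<inter> A) <#> generate G {d})"
    using generate_Un_Int_A_subset[OF U V x d] by blast
  then obtain u c where uc: "u \<in> U \<inter> A" "c \<in> (V \<inter> A) <#> generate G {d}" "e = u \<otimes> c"
    by (rule set_multE)
  obtain w s where ws: "w \<in> V \<inter> A" "s \<in> generate G {d}" "c = w \<otimes> s"
    using uc(2) by (rule set_multE)
  obtain k :: nat where k: "s = d [^] k" by (rule nat_power_of_generate_A[OF d(1) ws(2)])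
  have uC: "u \<in> carrier G" "c \<in> carrier G" using uc(1,2) A_carrier ws k d(1) by auto
  have "c = inv u \<otimes> e" using uc(3) uC by (simp add: m_assoc[symmetric])
  also have "\<dots> \<in> Z"
    using e uc(1) UZ by (intro subgroup.m_closed[OF Z _] subgroup.m_inv_closed[OF Z]) blast+
  finally have "w \<otimes> d [^] k \<in> Z" using ws(3) k by simp
  then have "w \<otimes> d [^] k \<in> ?D"
    using A_power_mem[OF sD Z V _ _ d(1) d(2) VZD ws(1)] x(1) UD UZ by blast
  then have "c \<in> ?D" using ws(3) k by simp
  then show "e \<in> ?D" using uc(1,3) UD subgroup.m_closed[OF sD] by blast
qed

lemma coset_meets_subgroup:
  assumes V: "subgroup V G" "\<not> V \<subseteq> A" and x: "x \<in> carrier G"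
  obtains d where "d \<in> A" "x \<otimes> d \<in> V"
proof -
  have "x \<in> A <#> V" using supplement[OF V] x by blast
  then obtain a y where ay: "a \<in> A" "y \<in> V" "x = a \<otimes> y" by (rule set_multE)
  have ia: "inv a \<in> A" by (rule subgroup.m_inv_closed[OF subgroup_A ay(1)])
  have ac: "a \<in> carrier G" and yc: "y \<in> carrier G"
    using A_carrier[OF ay(1)] subgroup.mem_carrier[OF V(1) ay(2)] .
  have "x \<otimes> (inv x \<otimes> inv a \<otimes> x) = inv a \<otimes> x" using x ac by (simp add: m_assoc[symmetric])
  also have "\<dots> = y" unfolding ay(3) using ac yc by (simp add: m_assoc[symmetric])
  finally have "x \<otimes> (inv x \<otimes> inv a \<otimes> x) = y" .
  then show ?thesis using that normal.inv_op_closed1[OF A_normal x ia] ay(2) by simp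
qed

lemma modular_law_outside_A:
  assumes U: "subgroup U G" and V: "subgroup V G" and Z: "subgroup Z G" and UZ: "U \<subseteq> Z"
    and nU: "\<not> U \<subseteq> A" and nV: "\<not> V \<subseteq> A"
  shows "modular_law G U V Z"
proof -
  obtain x where x: "x \<in> U" "x \<notin> A" using nU by blast
  obtain d where d: "d \<in> A" "x \<otimes> d \<in> V"
    using coset_meets_subgroup[OF V nV subgroup.mem_carrier[OF U x(1)]] .
  have Uc: "U \<subseteq> carrier G" and Vc: "V \<subseteq> carrier G" using U V subgroup.subset by auto
  have "generate G (U \<union> V) \<inter> Z \<subseteq> generate G (U \<union> (V \<inter> Z))"
  proof (rule subset_if_Int_A_subset)
    show "subgroup (generate G (U \<union> V) \<inter> Z) G"
      by (rule subgroups_Inter_pair[OF generate_is_subgroup Z]) (use Uc Vc in blast)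
    show "subgroup (generate G (U \<union> (V \<inter> Z))) G" by (rule generate_is_subgroup) (use Uc Vc in blast)
    show "generate G (U \<union> (V \<inter> Z)) \<subseteq> generate G (U \<union> V) \<inter> Z"
      by (rule generate_Un_Int_subset[OF Uc Vc Z UZ])
    show "\<not> generate G (U \<union> (V \<inter> Z)) \<subseteq> A"
      using x generate.incl[of x "U \<union> (V \<inter> Z)" G] by blast
  qed (rule Int_A_subset_generate[OF U V Z UZ x d])
  then show ?thesis unfolding modular_law_def .
qed

lemma modular_law_all:
  assumes U: "subgroup U G" and V: "subgroup V G" and Z: "subgroup Z G" and UZ: "U \<subseteq> Z"
  shows "modular_law G U V Z"
proof (cases "U \<subseteq> A \<or> V \<subseteq> A")
  case True
  then show ?thesis
    using modular_law_normal(1)[OF normal_if_subset_A[OF U] V Z] modular_law_normal(2)[OF normal_if_subset_A[OF V] U Z] UZ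
    by blast
next
  case False
  then show ?thesis using modular_law_outside_A[OF U V Z UZ] by blast
qed

lemma subgroup_is_modular:
  assumes "subgroup B G" shows "modular_subgroup G B"
  unfolding modular_subgroup_iff using assms modular_law_all by blast

end

lemma (in group) normal_if_power_automorphism:
  assumes A: "subgroup A G" and comm: "\<And>x y. x \<in> A \<Longrightarrow> y \<in> A \<Longrightarrow> x \<otimes> y = y \<otimes> x"
    and t: "t \<in> carrier G" and gen: "A <#> generate G {t} = carrier G"
    and power: "\<forall>B. subgroup B G \<and> B \<subseteq> A \<longrightarrow> (\<lambda>x. t \<otimes> x \<otimes> inv t) ` B = B"
    and C: "subgroup C G" "C \<subseteq> A"
  shows "C \<lhd> G"
proof (rule normal_if_conjugation_invariant_generators[OF C(1), of "insert t A"])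
  show "insert t A \<subseteq> carrier G" using t subgroup.subset[OF A] by blast
  have "A <#> generate G {t} \<subseteq> generate G (insert t A)"
    using generate.incl[of _ "insert t A" G] mono_generate[of "{t}" "insert t A"]
    by (intro set_mult_subset_subgroup generate_is_subgroup) (use t subgroup.subset[OF A] in auto)
  then show "carrier G \<subseteq> generate G (insert t A)" using gen by simp
next
  fix g assume "g \<in> insert t A"
  then show "(\<lambda>x. g \<otimes> x \<otimes> inv g) ` C = C"
  proof
    assume "g = t" then show ?thesis using power C by blast
  next
    assume g: "g \<in> A"
    have "g \<otimes> x \<otimes> inv g = x" if "x \<in> C" for x
    proof -
      have "x \<in> A" using that C(2) by blast
      then have "g \<otimes> x = x \<otimes> g" "x \<in> carrier G" "g \<in> carrier G"
        using comm[OF g] subgroup.mem_carrier[OF A] g by auto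
      then show ?thesis by (simp add: m_assoc)
    qed
    then show ?thesis by (simp cong: image_cong)
  qed
qed

lemma (in group) supplement_if_prime_index:
  assumes A: "A \<lhd> G" and t: "t \<in> carrier G" "ord t = q" "Factorial_Ring.prime q"
    and gen: "A <#> generate G {t} = carrier G" and H: "subgroup H G" "\<not> H \<subseteq> A"
  shows "carrier G \<subseteq> A <#> H"
proof -
  let ?E = "A <#> H"
  have sA: "subgroup A G" by (rule normal_imp_subgroup[OF A])
  have sE: "subgroup ?E G" by (rule mult_norm_subgroup[OF A H(1)])
  have AE: "A \<subseteq> ?E" by (rule subset_set_mult_left[OF H(1) subgroup.subset[OF sA]])
  have HE: "H \<subseteq> ?E" by (rule subset_set_mult_right[OF sA subgroup.subset[OF H(1)]])
  obtain h where h: "h \<in> H" "h \<notin> A" using H(2) by blast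
  then have "h \<in> A <#> generate G {t}" using gen subgroup.mem_carrier[OF H(1) h(1)] by simp
  then obtain a s where as: "a \<in> A" "s \<in> generate G {t}" "h = a \<otimes> s" by (rule set_multE)
  have "ord t \<noteq> 0" using t(2,3) by auto
  then obtain k :: nat where k: "s = t [^] k" using as(2) generate_pow_nat[OF t(1)] by blast
  have ac: "a \<in> carrier G" and sc: "s \<in> carrier G" using subgroup.mem_carrier[OF sA as(1)] k t(1) by auto
  have "s = inv a \<otimes> h" using as(3) ac sc by (simp add: m_assoc[symmetric])
  also have "\<dots> \<in> ?E"
    using as(1) h(1) AE HE by (intro subgroup.m_closed[OF sE _] subgroup.m_inv_closed[OF sE]) blast+
  finally have sE': "s \<in> ?E" .
  have "\<not> q dvd k"
  proof
    assume "q dvd k"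
    then have "s = \<one>" using k pow_eq_id[OF t(1)] t(2) by simp
    then show False using h as subgroup.one_closed[OF sA] ac by simp
  qed
  then obtain j where "(k * j) mod q = 1" using mod_inverse_exists[OF t(3)] by blast
  moreover have "t [^] q = \<one>" using pow_ord_eq_1[OF t(1)] t(2) by simp
  ultimately have "s [^] j = t" using k pow_pow_mod_inverse[OF t(1)] by simp
  then have "t \<in> ?E" using subgroup_nat_pow_closed[OF sE sE'] by metis
  then have "generate G {t} \<subseteq> ?E" by (intro generate_subgroup_incl[OF _ sE]) blast
  then show ?thesis using gen set_mult_subset_subgroup[OF sE AE] by blast
qed

lemma (in group) P_group_decomposition_if_P_group_type:
  assumes "P_group_type p q G"
  obtains A where "P_group_decomposition G A p"
proof -
  from assms obtain A t where p: "Factorial_Ring.prime p" and q: "Factorial_Ring.prime q"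
    and A: "A \<lhd> G" and cg: "comm_group (G\<lparr>carrier := A\<rparr>)"
    and exp: "\<forall>x\<in>A. x [^] p = \<one>" and t: "t \<in> carrier G" "ord t = q"
    and gen: "A <#> generate G {t} = carrier G"
    and power: "\<forall>B. subgroup B G \<and> B \<subseteq> A \<longrightarrow> (\<lambda>x. t \<otimes> x \<otimes> inv t) ` B = B"
    unfolding P_group_type_def by blast
  have comm: "\<And>x y. x \<in> A \<Longrightarrow> y \<in> A \<Longrightarrow> x \<otimes> y = y \<otimes> x"
    using comm_monoid.m_comm[OF comm_group.axioms(1)[OF cg]] by simp
  show ?thesis
  proof (rule that, intro P_group_decomposition.intro is_group P_group_decomposition_axioms.intro)
    show "C \<lhd> G" if "subgroup C G" "C \<subseteq> A" for C
      by (rule normal_if_power_automorphism[OF normal_imp_subgroup[OF A] comm t(1) gen power that])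
    show "carrier G \<subseteq> A <#> H" if "subgroup H G" "\<not> H \<subseteq> A" for H
      by (rule supplement_if_prime_index[OF A t q gen that])
  qed (use A comm exp p in auto)
qed

lemma (in normal) quotient_map_group_hom: "group_hom G (G Mod H) (\<lambda>a. H #> a)"
  using r_coset_hom_Mod factorgroup_is_group is_group unfolding group_hom_def group_hom_axioms_def by blast

lemma (in normal) quotient_map_surj: "(\<lambda>a. H #> a) ` carrier G = carrier (G Mod H)"
  unfolding FactGroup_def RCOSETS_def by auto

lemma group_hom_comp_surj:
  assumes "group_hom G H h" "h ` carrier G = carrier H" "group_hom H K k" "k ` carrier H = carrier K"
  shows "group_hom G K (k \<circ> h)" "(k \<circ> h) ` carrier G = carrier K"
proof -
  show "group_hom G K (k \<circ> h)"
    using assms(1,3) hom_compose[of h G H k K] unfolding group_hom_def group_hom_axioms_def by blast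
  show "(k \<circ> h) ` carrier G = carrier K"
    using assms(2,4) image_image[of k h "carrier G"] by simp
qed

lemma (in group_hom) sigma_quasinormal_vimage_of_P_group:
  assumes fin: "finite (carrier G)" and surj: "h ` carrier G = carrier H"
    and P: "sigma_primary \<sigma> H" "P_group_type p q H" and B: "subgroup B H"
  shows "sigma_quasinormal \<sigma> G (carrier G \<inter> h -` B)"
proof -
  obtain A where "P_group_decomposition H A p" by (rule H.P_group_decomposition_if_P_group_type[OF P(2)])
  then have "modular_subgroup H B" using P_group_decomposition.subgroup_is_modular B by blast
  then have "modular_subgroup G (carrier G \<inter> h -` B)" by (rule modular_subgroup_vimage[OF surj])
  moreover have "sigma_subnormal \<sigma> G (carrier G \<inter> h -` B)"
    by (rule sigma_subnormal_of_kernel_subset[OF fin surj P(1) subgroup_vimage[OF B] kernel_subset_vimage[OF B]])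
  ultimately show ?thesis unfolding sigma_quasinormal_def by blast
qed

lemma QsigmaT_group_modular_in_P_image:
  assumes fin: "finite (carrier G)" and QT: "QsigmaT_group \<sigma> G"
    and f: "group_hom G Y f" "f ` carrier G = carrier Y"
    and Q: "Q \<lhd> Y" "sigma_primary \<sigma> (Y\<lparr>carrier := Q\<rparr>)" "P_group_type p q (Y\<lparr>carrier := Q\<rparr>)"
    and B: "subgroup B Y" "B \<subseteq> Q"
  shows "modular_subgroup Y B"
proof -
  interpret f: group_hom G Y f by (rule f(1))
  define Qs where "Qs = carrier G \<inter> f -` Q"
  define Bs where "Bs = carrier G \<inter> f -` B"
  have nQs: "Qs \<lhd> G" unfolding Qs_def by (rule f.normal_vimage[OF Q(1)])
  have sQs: "subgroup Qs G" by (rule normal_imp_subgroup[OF nQs])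
  have img: "f ` Qs = Q"
    unfolding Qs_def by (rule f.image_vimage_eq[OF f(2) subgroup.subset[OF normal_imp_subgroup[OF Q(1)]]])
  have res: "group_hom (G\<lparr>carrier := Qs\<rparr>) (Y\<lparr>carrier := Q\<rparr>) f"
    using f.induced_group_hom[OF sQs] img by simp
  have "sigma_quasinormal \<sigma> (G\<lparr>carrier := Qs\<rparr>) (Qs \<inter> f -` B)"
    using group_hom.sigma_quasinormal_vimage_of_P_group[OF res _ _ Q(2,3)] fin img
      f.H.subgroup_incl[OF B(1) normal_imp_subgroup[OF Q(1)] B(2)] unfolding Qs_def by simp
  moreover have "Qs \<inter> f -` B = Bs" unfolding Bs_def Qs_def using B(2) by blast
  ultimately have "sigma_quasinormal \<sigma> G Bs"
    using QT[unfolded QsigmaT_group_def, rule_format, of Qs Bs] sQs f.G.normal_sigma_quasinormal[OF nQs]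
    by blast
  then have "modular_subgroup Y (f ` Bs)"
    using f.modular_subgroup_image[OF f(2)] unfolding sigma_quasinormal_def by blast
  then show ?thesis
    unfolding Bs_def using f.image_vimage_eq[OF f(2) subgroup.subset[OF B(1)]] by simp
qed

theorem lemma2p5:
  fixes \<sigma> :: "nat set set" and G :: "('a, 'b) monoid_scheme"
  assumes "prime_partition \<sigma>" and "group G" and "finite (carrier G)"
    and "QsigmaT_group \<sigma> G"
  shows "\<forall>R. R \<lhd> G \<longrightarrow> Q_sigma_P \<sigma> (G Mod R)"
  unfolding Q_sigma_P_def Q_sigma_pq_def
proof (intro allI impI, elim conjE)
  fix R p q N Q B
  assume R: "R \<lhd> G" and N: "N \<lhd> G Mod R" and Q: "Q \<lhd> G Mod R Mod N"
    "sigma_primary \<sigma> ((G Mod R Mod N)\<lparr>carrier := Q\<rparr>)" "P_group_type p q ((G Mod R Mod N)\<lparr>carrier := Q\<rparr>)"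
    and B: "subgroup B (G Mod R Mod N)" "B \<subseteq> Q"
  let ?f = "(\<lambda>a. N #>\<^bsub>G Mod R\<^esub> a) \<circ> (\<lambda>a. R #>\<^bsub>G\<^esub> a)"
  have "group_hom G (G Mod R Mod N) ?f" "?f ` carrier G = carrier (G Mod R Mod N)"
    by (rule group_hom_comp_surj[OF normal.quotient_map_group_hom[OF R] normal.quotient_map_surj[OF R]
          normal.quotient_map_group_hom[OF N] normal.quotient_map_surj[OF N]])+
  then show "modular_subgroup (G Mod R Mod N) B"
    by (rule QsigmaT_group_modular_in_P_image[OF assms(3,4) _ _ Q B])
qed

end
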